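(* Let $\{y_k\}$ be the random sequence generated by the PASKM algorithm. Take $0 \leq 1-\alpha < 1$, $0 \le \omega < 1$, $0 < \delta < \frac{2(1-\omega+\alpha\omega)}{1+2\omega-2\alpha\omega}$ and $\alpha\gamma = \alpha\delta + \omega\delta(1-\alpha)$. Define $\bar{y}_k = \frac{1}{k}\sum_{l=1}^{k} y_l$. Then $$\mathbb{E}[f(\bar{y}_k)] \leq \frac{(1-\omega+\alpha\omega)^2\, d(y_0,P)^2 + 2\delta(\delta-2+3\omega-3\alpha\omega+\delta\omega-\delta\alpha\omega) f(y_0)}{2\delta k(2-2\omega+2\alpha\omega-2\delta\omega+2\delta\alpha\omega-\delta)}.$$
   Context: Linear feasibility problem $Ax \leq b$ with $A \in \mathbb{R}^{m\times n}$, $b \in \mathbb{R}^m$, assumed consistent, with rows $a_i^T$ normalized ($\|a_i\|=1$). $P = \{x : Ax \leq b\}$, $\mathcal{P}(x)$ the Euclidean projection onto $P$, $d(x,P) = \|x-\mathcal{P}(x)\|$. Sampling: at each iteration a set $\tau$ of $\beta$ rows is chosen uniformly at random among all $\binom{m}{\beta}$ subsets and $i^* = \arg\max_{i\in\tau}(a_i^Ty-b_i)^+$ for the current point $y$; $\mathbb{E}_{\mathbb{S}}$ denotes expectation over this sampling. $f(x) = \mathbb{E}_{\mathbb{S}}\big[\tfrac12|(a_{i^*}^Tx-b_{i^*})^+|^2\big]$. PASKM algorithm: $v_0 = x_0$ (so $y_0 = x_0 = v_0$); for $k\ge0$: $y_k = \alpha v_k + (1-\alpha)x_k$; sample and pick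 $i^*$ at $y_k$; $x_{k+1} = y_k - \delta(a_{i^*}^Ty_k-b_{i^*})^+a_{i^*}$; $v_{k+1} = \omega v_k + (1-\omega)y_k - \gamma(a_{i^*}^Ty_k-b_{i^*})^+a_{i^*}$. *)

theory Defs
  imports "HOL-Analysis.Analysis"
begin

text \<open>Rows of A are indexed by the finite type 'm (so m = CARD('m)), vectors live in real^'n.\<close>

definition viol :: "real^'n^'m \<Rightarrow> real^'m \<Rightarrow> 'm \<Rightarrow> real^'n \<Rightarrow> real" where
  "viol A b i x = max 0 (A$i \<bullet> x - b$i)"

definition feas_set :: "real^'n^'m \<Rightarrow> real^'m \<Rightarrow> (real^'n) set" where
  "feas_set A b = {x. \<forall>i. A$i \<bullet> x \<le> b$i}"

definition samples :: "nat \<Rightarrow> ('m::finite) set set" where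
  "samples \<beta> = {\<tau>. card \<tau> = \<beta>}"

definition fobj :: "real^'n^('m::finite) \<Rightarrow> real^'m \<Rightarrow> nat \<Rightarrow> real^'n \<Rightarrow> real" where
  "fobj A b \<beta> x =
     (\<Sum>\<tau>\<in>samples \<beta>. (1/2) * (Max ((\<lambda>i. viol A b i x) ` \<tau>))^2) / real (card (samples \<beta> :: 'm set set))"

definition paskm_step ::
  "real^'n^'m \<Rightarrow> real^'m \<Rightarrow> ('m set \<Rightarrow> real^'n \<Rightarrow> 'm) \<Rightarrow> real \<Rightarrow> real \<Rightarrow> real \<Rightarrow> real
   \<Rightarrow> 'm set \<Rightarrow> ((real^'n) \<times> (real^'n)) \<Rightarrow> ((real^'n) \<times> (real^'n))" where
  "paskm_step A b sel \<alpha> \<omega> \<delta> \<gamma> \<tau> p =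
     (let x = fst p; v = snd p;
          y = \<alpha> *\<^sub>R v + (1 - \<alpha>) *\<^sub>R x;
          i = sel \<tau> y;
          r = viol A b i y
      in (y - (\<delta> * r) *\<^sub>R (A$i),
          \<omega> *\<^sub>R v + (1 - \<omega>) *\<^sub>R y - (\<gamma> * r) *\<^sub>R (A$i)))"

text \<open>y_k as a function of the samples ts = [tau_0, ..., tau_{k-1}], with x_0 = v_0.\<close>
definition paskm_y ::
  "real^'n^'m \<Rightarrow> real^'m \<Rightarrow> ('m set \<Rightarrow> real^'n \<Rightarrow> 'm) \<Rightarrow> real \<Rightarrow> real \<Rightarrow> real \<Rightarrow> real
   \<Rightarrow> real^'n \<Rightarrow> 'm set list \<Rightarrow> real^'n" where
  "paskm_y A b sel \<alpha> \<omega> \<delta> \<gamma> x0 ts =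
     (let p = fold (paskm_step A b sel \<alpha> \<omega> \<delta> \<gamma>) ts (x0, x0)
      in \<alpha> *\<^sub>R snd p + (1 - \<alpha>) *\<^sub>R fst p)"

definition paskm_ybar ::
  "real^'n^'m \<Rightarrow> real^'m \<Rightarrow> ('m set \<Rightarrow> real^'n \<Rightarrow> 'm) \<Rightarrow> real \<Rightarrow> real \<Rightarrow> real \<Rightarrow> real
   \<Rightarrow> real^'n \<Rightarrow> 'm set list \<Rightarrow> real^'n" where
  "paskm_ybar A b sel \<alpha> \<omega> \<delta> \<gamma> x0 ts =
     (1 / real (length ts)) *\<^sub>R (\<Sum>l=1..length ts. paskm_y A b sel \<alpha> \<omega> \<delta> \<gamma> x0 (take l ts))"

text \<open>All possible sample histories of length k (i.i.d. uniform sampling = uniform on this set).\<close>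
definition sample_seqs :: "nat \<Rightarrow> nat \<Rightarrow> ('m::finite) set list set" where
  "sample_seqs \<beta> k = {ts. length ts = k \<and> set ts \<subseteq> samples \<beta>}"

definition expect_seqs :: "nat \<Rightarrow> nat \<Rightarrow> (('m::finite) set list \<Rightarrow> real) \<Rightarrow> real" where
  "expect_seqs \<beta> k F = (\<Sum>ts\<in>sample_seqs \<beta> k. F ts) / real (card (sample_seqs \<beta> k :: 'm set list set))"

end

theory Submission
  imports Defs
begin

(*
  Let theta = omega (1 - alpha) and let p be the projection of x_0 onto P. The relation
  between gamma and delta makes z_k = alpha v_k + (1 - omega)(1 - alpha) x_k - (1 - theta) p
  move like a plain Kaczmarz iterate, z_(k+1) = z_k - delta r_k a_i, where i is the selected
  row and r_k its violation at y_k. Expanding ||z_(k+1)||^2 and using a_i^T p <= b_i shows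
  that, in expectation over the sample, ||z||^2 decreases by a multiple of f(y_k) up to a
  multiple of f(x_k), while E f(x_(k+1)) <= (1 + delta)^2 f(y_k). Telescoping the two
  recursions bounds sum_(l=1..k) E f(y_l), and Jensen's inequality for the convex function f
  passes the bound to the average ybar_k.
*)

definition avg :: "'a set \<Rightarrow> ('a \<Rightarrow> real) \<Rightarrow> real" where
  "avg X G = (\<Sum>x\<in>X. G x) / real (card X)"

lemma avg_cong: "(\<And>x. x \<in> X \<Longrightarrow> G x = H x) \<Longrightarrow> avg X G = avg X H"
  unfolding avg_def by simp

lemma avg_mono: "(\<And>x. x \<in> X \<Longrightarrow> G x \<le> H x) \<Longrightarrow> avg X G \<le> avg X H"
  unfolding avg_def by (intro divide_right_mono sum_mono) auto

lemma avg_nonneg: "(\<And>x. x \<in> X \<Longrightarrow> 0 \<le> G x) \<Longrightarrow> 0 \<le> avg X G"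
  unfolding avg_def by (intro divide_nonneg_nonneg sum_nonneg) auto

lemma avg_add: "avg X (\<lambda>x. G x + H x) = avg X G + avg X H"
  unfolding avg_def by (simp add: sum.distrib add_divide_distrib)

lemma avg_diff: "avg X (\<lambda>x. G x - H x) = avg X G - avg X H"
  unfolding avg_def by (simp add: sum_subtractf diff_divide_distrib)

lemma avg_cmult: "avg X (\<lambda>x. c * G x) = c * avg X G"
  unfolding avg_def by (simp add: sum_distrib_left[symmetric])

lemma avg_divide: "avg X (\<lambda>x. G x / c) = avg X G / c"
  unfolding avg_def by (simp add: sum_divide_distrib mult.commute)

lemma avg_const: "finite X \<Longrightarrow> X \<noteq> {} \<Longrightarrow> avg X (\<lambda>x. c) = c"
  unfolding avg_def by simp

lemma avg_singleton: "avg {a} G = G a"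
  unfolding avg_def by simp

lemma avg_sum: "avg X (\<lambda>x. \<Sum>l\<in>L. G l x) = (\<Sum>l\<in>L. avg X (G l))"
  unfolding avg_def by (simp add: sum.swap[of _ X] sum_divide_distrib)

lemma convex_on_avg:
  assumes "convex S" "\<And>t. t \<in> T \<Longrightarrow> convex_on S (G t)"
  shows "convex_on S (\<lambda>x. avg T (\<lambda>t. G t x))"
  unfolding convex_on_def
proof (intro conjI assms(1) ballI allI impI)
  fix x y and u v :: real
  assume xy: "x \<in> S" "y \<in> S" and uv: "0 \<le> u" "0 \<le> v" "u + v = 1"
  have "avg T (\<lambda>t. G t (u *\<^sub>R x + v *\<^sub>R y)) \<le> avg T (\<lambda>t. u * G t x + v * G t y)"
    using assms(2) xy uv by (intro avg_mono) (auto simp: convex_on_def)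
  then show "avg T (\<lambda>t. G t (u *\<^sub>R x + v *\<^sub>R y)) \<le> u * avg T (\<lambda>t. G t x) + v * avg T (\<lambda>t. G t y)"
    by (simp add: avg_add avg_cmult)
qed

lemma expect_seqs_eq_avg: "expect_seqs \<beta> k F = avg (sample_seqs \<beta> k) F"
  unfolding expect_seqs_def avg_def ..

lemma samples_nonempty: "\<beta> \<le> CARD('m::finite) \<Longrightarrow> samples \<beta> \<noteq> ({} :: 'm set set)"
proof -
  assume "\<beta> \<le> CARD('m)"
  then obtain \<tau> :: "'m set" where "card \<tau> = \<beta>"
    by (metis obtain_subset_with_card_n)
  then show ?thesis
    unfolding samples_def by blast
qed

lemma sample_seqs_0: "sample_seqs \<beta> 0 = {[]}"
  unfolding sample_seqs_def by auto

lemma sample_seqs_Suc: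
  "sample_seqs \<beta> (Suc l) = (\<lambda>(ts, t). ts @ [t]) ` (sample_seqs \<beta> l \<times> samples \<beta>)"
  unfolding sample_seqs_def by (auto simp: length_Suc_conv_rev image_iff)

lemma avg_sample_seqs_Suc:
  "avg (sample_seqs \<beta> (Suc l) :: ('m::finite) set list set) F
   = avg (sample_seqs \<beta> l) (\<lambda>ts. avg (samples \<beta>) (\<lambda>t. F (ts @ [t])))"
proof -
  let ?S = "sample_seqs \<beta> l :: 'm set list set" and ?T = "samples \<beta> :: 'm set set"
  have inj: "inj_on (\<lambda>(ts, t). ts @ [t]) (?S \<times> ?T)"
    by (auto simp: inj_on_def)
  have sum: "sum F (sample_seqs \<beta> (Suc l)) = (\<Sum>ts\<in>?S. \<Sum>t\<in>?T. F (ts @ [t]))"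
    unfolding sample_seqs_Suc sum.reindex[OF inj]
    by (simp add: sum.cartesian_product prod.case_distrib)
  have card: "card (sample_seqs \<beta> (Suc l) :: 'm set list set) = card ?S * card ?T"
    unfolding sample_seqs_Suc card_image[OF inj] by (simp add: card_cartesian_product)
  show ?thesis
    unfolding avg_def sum card
    by (simp add: sum_divide_distrib[symmetric] divide_divide_eq_left mult.commute)
qed

lemma avg_sample_seqs_take:
  assumes "\<beta> \<le> CARD('m::finite)" "l \<le> k"
  shows "avg (sample_seqs \<beta> k :: 'm set list set) (\<lambda>ts. F (take l ts)) = avg (sample_seqs \<beta> l) F"
  using assms(2)
proof (induction k rule: dec_induct)
  case base
  show ?case
    by (rule avg_cong) (simp add: sample_seqs_def)
next
  case (step k)
  have "avg (sample_seqs \<beta> (Suc k) :: 'm set list set) (\<lambda>ts. F (take l ts))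
      = avg (sample_seqs \<beta> k) (\<lambda>ts. avg (samples \<beta>) (\<lambda>t. F (take l (ts @ [t]))))"
    by (rule avg_sample_seqs_Suc)
  also have "\<dots> = avg (sample_seqs \<beta> k) (\<lambda>ts. F (take l ts))"
    using step(1) samples_nonempty[OF assms(1)]
    by (intro avg_cong) (simp add: sample_seqs_def avg_const)
  finally show ?case
    using step.IH by simp
qed

lemma telescoping_sum_le:
  fixes a F G :: "nat \<Rightarrow> real"
  assumes a_Suc: "\<And>l. 1 \<le> l \<Longrightarrow> a (Suc l) \<le> a l - c * F l + e * G l"
    and a_1: "a 1 \<le> a 0 - c\<^sub>0 * F 0"
    and G_Suc: "\<And>l. G (Suc l) \<le> \<kappa> * F l"
    and nonneg: "\<And>l. 0 \<le> a l" "\<And>l. 0 \<le> F l" "0 \<le> e" "0 \<le> \<kappa>"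
  shows "(c - e * \<kappa>) * (\<Sum>l=1..k. F l) \<le> a 0 - (c\<^sub>0 - e * \<kappa>) * F 0"
proof -
  have "a (Suc k) + e * \<kappa> * F k + (c - e * \<kappa>) * (\<Sum>l=1..k. F l)
      \<le> a 0 - (c\<^sub>0 - e * \<kappa>) * F 0"
  proof (induction k)
    case 0
    show ?case
      using a_1 by (simp add: algebra_simps)
  next
    case (Suc k)
    have "e * G (Suc k) \<le> e * (\<kappa> * F k)"
      using G_Suc nonneg(3) by (rule mult_left_mono)
    moreover have "(c - e * \<kappa>) * (\<Sum>l=1..Suc k. F l)
        = (c - e * \<kappa>) * (\<Sum>l=1..k. F l) + (c - e * \<kappa>) * F (Suc k)"
      by (simp add: distrib_left)
    ultimately show ?case
      using a_Suc[of "Suc k"] Suc.IH by (simp add: algebra_simps)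
  qed
  moreover have "0 \<le> a (Suc k) + e * \<kappa> * F k"
    using nonneg by simp
  ultimately show ?thesis
    by linarith
qed

lemma closed_feas_set: "closed (feas_set A b)"
proof -
  have "feas_set A b = (\<Inter>i. {x. A$i \<bullet> x \<le> b$i})"
    unfolding feas_set_def by auto
  then show ?thesis
    by (simp add: closed_INT closed_halfspace_le)
qed

definition max_viol :: "real^'n^'m \<Rightarrow> real^'m \<Rightarrow> 'm set \<Rightarrow> real^'n \<Rightarrow> real" where
  "max_viol A b \<tau> x = Max ((\<lambda>i. viol A b i x) ` \<tau>)"

lemma fobj_eq_avg: "fobj A b \<beta> x = avg (samples \<beta>) (\<lambda>\<tau>. (max_viol A b \<tau> x)\<^sup>2 / 2)"
  unfolding fobj_def avg_def max_viol_def by simp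

lemma fobj_nonneg: "0 \<le> fobj A b \<beta> x"
  unfolding fobj_eq_avg by (rule avg_nonneg) simp

lemma samples_memberD: "1 \<le> \<beta> \<Longrightarrow> \<tau> \<in> samples \<beta> \<Longrightarrow> finite \<tau> \<and> \<tau> \<noteq> {}"
  for \<tau> :: "'m::finite set"
  unfolding samples_def by auto

lemma viol_le_max_viol: "finite \<tau> \<Longrightarrow> i \<in> \<tau> \<Longrightarrow> viol A b i x \<le> max_viol A b \<tau> x"
  unfolding max_viol_def by (intro Max_ge) auto

lemma max_viol_nonneg: "finite \<tau> \<Longrightarrow> \<tau> \<noteq> {} \<Longrightarrow> 0 \<le> max_viol A b \<tau> x"
  using viol_le_max_viol[of \<tau> _ A b x] by (force simp: viol_def)

lemma convex_on_viol:
  fixes A :: "real^'n^'m" and b :: "real^'m"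
  shows "convex_on UNIV (viol A b i)"
proof (rule convex_onI)
  fix t :: real and x y :: "real^'n"
  assume t: "0 < t" "t < 1"
  have "A$i \<bullet> ((1 - t) *\<^sub>R x + t *\<^sub>R y) - b$i = (1 - t) * (A$i \<bullet> x - b$i) + t * (A$i \<bullet> y - b$i)"
    by (simp add: inner_add_right algebra_simps)
  also have "\<dots> \<le> (1 - t) * viol A b i x + t * viol A b i y"
    unfolding viol_def using t by (intro add_mono mult_left_mono) auto
  finally show "viol A b i ((1 - t) *\<^sub>R x + t *\<^sub>R y) \<le> (1 - t) * viol A b i x + t * viol A b i y"
    using t by (simp add: viol_def)
qed simp

lemma convex_on_Max:
  assumes "finite I" "I \<noteq> {}" "convex S" "\<And>i. i \<in> I \<Longrightarrow> convex_on S (g i)"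
  shows "convex_on S (\<lambda>x. Max ((\<lambda>i. g i x) ` I))"
  unfolding convex_on_def
proof (intro conjI assms(3) ballI allI impI)
  fix x y and u v :: real
  assume xy: "x \<in> S" "y \<in> S" and uv: "0 \<le> u" "0 \<le> v" "u + v = 1"
  have "g i (u *\<^sub>R x + v *\<^sub>R y) \<le> u * Max ((\<lambda>i. g i x) ` I) + v * Max ((\<lambda>i. g i y) ` I)"
    if i: "i \<in> I" for i
  proof -
    have "g i (u *\<^sub>R x + v *\<^sub>R y) \<le> u * g i x + v * g i y"
      using assms(4)[OF i] xy uv by (simp add: convex_on_def)
    also have "\<dots> \<le> u * Max ((\<lambda>i. g i x) ` I) + v * Max ((\<lambda>i. g i y) ` I)"
      using i assms(1) uv by (intro add_mono mult_left_mono Max_ge) auto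
    finally show ?thesis .
  qed
  then show "Max ((\<lambda>i. g i (u *\<^sub>R x + v *\<^sub>R y)) ` I)
      \<le> u * Max ((\<lambda>i. g i x) ` I) + v * Max ((\<lambda>i. g i y) ` I)"
    using assms(1,2) by simp
qed

lemma convex_on_power2:
  assumes "convex_on S g" "\<And>x. x \<in> S \<Longrightarrow> 0 \<le> g x"
  shows "convex_on S (\<lambda>x. (g x)\<^sup>2)"
  unfolding convex_on_def
proof (intro conjI ballI allI impI)
  show "convex S"
    using assms(1) by (rule convex_on_imp_convex)
  fix x y and u v :: real
  assume xy: "x \<in> S" "y \<in> S" and uv: "0 \<le> u" "0 \<le> v" "u + v = 1"
  have "(g (u *\<^sub>R x + v *\<^sub>R y))\<^sup>2 \<le> (u * g x + v * g y)\<^sup>2"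
    using assms xy uv \<open>convex S\<close> by (intro power_mono) (auto simp: convex_on_def convex_def)
  also have "\<dots> \<le> u * (g x)\<^sup>2 + v * (g y)\<^sup>2"
    using convex_power2 uv by (simp add: convex_on_def)
  finally show "(g (u *\<^sub>R x + v *\<^sub>R y))\<^sup>2 \<le> u * (g x)\<^sup>2 + v * (g y)\<^sup>2" .
qed

lemma convex_fobj:
  assumes "1 \<le> \<beta>"
  shows "convex_on UNIV (fobj A b \<beta>)"
proof -
  have "convex_on UNIV (\<lambda>x. (max_viol A b \<tau> x)\<^sup>2 / 2)" if "\<tau> \<in> samples \<beta>" for \<tau>
  proof -
    have "finite \<tau>" "\<tau> \<noteq> {}"
      using samples_memberD[OF assms that] by auto
    then have "convex_on UNIV (max_viol A b \<tau>)"
      unfolding max_viol_def[abs_def] by (intro convex_on_Max convex_on_viol) auto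
    with \<open>finite \<tau>\<close> \<open>\<tau> \<noteq> {}\<close> show ?thesis
      by (intro convex_on_cdiv convex_on_power2) (auto intro: max_viol_nonneg)
  qed
  then have "convex_on UNIV (\<lambda>x. fobj A b \<beta> x)"
    unfolding fobj_eq_avg by (intro convex_on_avg) auto
  then show ?thesis
    by simp
qed

lemma fobj_mean_le:
  assumes "1 \<le> \<beta>" "1 \<le> k"
  shows "fobj A b \<beta> ((1 / real k) *\<^sub>R (\<Sum>l=1..k. y l)) \<le> (\<Sum>l=1..k. fobj A b \<beta> (y l)) / real k"
  using convex_on_sum[OF _ _ convex_fobj[OF assms(1)], of "{1..k}" "\<lambda>_. 1 / real k" y] assms(2)
  by (simp add: scaleR_sum_right sum_divide_distrib)

locale paskm =
  fixes A :: "real^'n^('m::finite)" and b :: "real^'m" and sel :: "'m set \<Rightarrow> real^'n \<Rightarrow> 'm"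
    and \<beta> :: nat and \<alpha> \<omega> \<delta> \<gamma> :: real
  assumes rows: "\<And>i. norm (A$i) = 1"
    and beta: "1 \<le> \<beta>" "\<beta> \<le> CARD('m)"
    and sel: "\<And>\<tau> y. \<tau> \<in> samples \<beta> \<Longrightarrow>
                 sel \<tau> y \<in> \<tau> \<and> (\<forall>i\<in>\<tau>. viol A b i y \<le> viol A b (sel \<tau> y) y)"
    and alpha: "0 \<le> \<alpha>" "\<alpha> \<le> 1"
    and omega: "0 \<le> \<omega>" "\<omega> \<le> 1"
    and delta: "0 \<le> \<delta>"
    and gamma: "\<alpha> * \<gamma> = \<alpha> * \<delta> + \<omega> * \<delta> * (1 - \<alpha>)"
begin

abbreviation step where "step \<equiv> paskm_step A b sel \<alpha> \<omega> \<delta> \<gamma>"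

abbreviation \<theta> where "\<theta> \<equiv> \<omega> * (1 - \<alpha>)"

definition y_of :: "(real^'n) \<times> (real^'n) \<Rightarrow> real^'n" where
  "y_of s = \<alpha> *\<^sub>R snd s + (1 - \<alpha>) *\<^sub>R fst s"

definition states :: "real^'n \<Rightarrow> 'm set list \<Rightarrow> (real^'n) \<times> (real^'n)" where
  "states x0 ts = fold step ts (x0, x0)"

definition expected_fobj_y :: "real^'n \<Rightarrow> nat \<Rightarrow> real" where
  "expected_fobj_y x0 l = avg (sample_seqs \<beta> l) (\<lambda>ts. fobj A b \<beta> (y_of (states x0 ts)))"

definition expected_fobj_x :: "real^'n \<Rightarrow> nat \<Rightarrow> real" where
  "expected_fobj_x x0 l = avg (sample_seqs \<beta> l) (\<lambda>ts. fobj A b \<beta> (fst (states x0 ts)))"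

lemma theta_nonneg: "0 \<le> \<theta>"
  using alpha omega by simp

lemma theta_le_1: "\<theta> \<le> 1"
  using alpha omega by (simp add: mult_le_one)

lemma samples_finite_nonempty: "finite (samples \<beta> :: 'm set set)" "samples \<beta> \<noteq> ({} :: 'm set set)"
  using samples_nonempty[OF beta(2)] by auto

lemma sample_finite_nonempty: "\<tau> \<in> samples \<beta> \<Longrightarrow> finite \<tau>" "\<tau> \<in> samples \<beta> \<Longrightarrow> \<tau> \<noteq> {}"
  using samples_memberD[OF beta(1)] by auto

lemma viol_sel_eq_max_viol: "\<tau> \<in> samples \<beta> \<Longrightarrow> viol A b (sel \<tau> y) y = max_viol A b \<tau> y"
  unfolding max_viol_def using sel sample_finite_nonempty by (intro Max_eqI[symmetric]) auto

lemma avg_max_viol_sq: "avg (samples \<beta>) (\<lambda>\<tau>. (max_viol A b \<tau> x)\<^sup>2) = 2 * fobj A b \<beta> x"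
  unfolding fobj_eq_avg avg_divide by simp

lemma y_of_diag: "fst s = snd s \<Longrightarrow> y_of s = fst s"
  unfolding y_of_def by (metis scaleR_collapse add.commute)

lemma fst_step: "fst (step \<tau> s) = y_of s - (\<delta> * viol A b (sel \<tau> (y_of s)) (y_of s)) *\<^sub>R A $ sel \<tau> (y_of s)"
  unfolding paskm_step_def y_of_def Let_def by simp

lemma inner_rows_ge: "-1 \<le> A$j \<bullet> A$i"
  using Cauchy_Schwarz_ineq2[of "A$j" "A$i"] rows by (simp add: abs_le_iff)

lemma max_viol_fst_step_le:
  assumes "\<tau> \<in> samples \<beta>" "\<tau>' \<in> samples \<beta>"
  shows "max_viol A b \<tau>' (fst (step \<tau> s)) \<le> max_viol A b \<tau>' (y_of s) + \<delta> * max_viol A b \<tau> (y_of s)"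
proof -
  define i where "i = sel \<tau> (y_of s)"
  define r where "r = max_viol A b \<tau> (y_of s)"
  have r: "viol A b i (y_of s) = r"
    unfolding i_def r_def using assms(1) by (rule viol_sel_eq_max_viol)
  have "0 \<le> \<delta> * r"
    unfolding r_def using delta max_viol_nonneg[OF sample_finite_nonempty[OF assms(1)]] by (rule mult_nonneg_nonneg)
  have "viol A b j (fst (step \<tau> s)) \<le> max_viol A b \<tau>' (y_of s) + \<delta> * r" if j: "j \<in> \<tau>'" for j
  proof -
    have "A$j \<bullet> fst (step \<tau> s) = A$j \<bullet> y_of s - (\<delta> * r) * (A$j \<bullet> A$i)"
      unfolding fst_step i_def[symmetric] r by (simp add: inner_diff_right)
    moreover have "- (\<delta> * r) * (A$j \<bullet> A$i) \<le> \<delta> * r"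
      using mult_left_mono[OF inner_rows_ge[of j i] \<open>0 \<le> \<delta> * r\<close>] by simp
    ultimately have "viol A b j (fst (step \<tau> s)) \<le> viol A b j (y_of s) + \<delta> * r"
      unfolding viol_def using \<open>0 \<le> \<delta> * r\<close> by (simp add: max_def)
    also have "\<dots> \<le> max_viol A b \<tau>' (y_of s) + \<delta> * r"
      using viol_le_max_viol[OF sample_finite_nonempty(1)[OF assms(2)] j] by simp
    finally show ?thesis .
  qed
  then show ?thesis
    unfolding max_viol_def[of A b \<tau>' "fst (step \<tau> s)"] r_def
    using sample_finite_nonempty[OF assms(2)] by simp
qed

lemma fobj_fst_step_le:
  assumes "\<tau> \<in> samples \<beta>"
  shows "fobj A b \<beta> (fst (step \<tau> s))
    \<le> (1 + \<delta>) * (fobj A b \<beta> (y_of s) + \<delta> / 2 * (max_viol A b \<tau> (y_of s))\<^sup>2)"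
proof -
  let ?r = "max_viol A b \<tau> (y_of s)"
  have "(max_viol A b \<tau>' (fst (step \<tau> s)))\<^sup>2 / 2
      \<le> (1 + \<delta>) * ((max_viol A b \<tau>' (y_of s))\<^sup>2 / 2 + \<delta> / 2 * ?r\<^sup>2)"
    if \<tau>': "\<tau>' \<in> samples \<beta>" for \<tau>'
  proof -
    let ?m = "max_viol A b \<tau>' (y_of s)"
    have "(max_viol A b \<tau>' (fst (step \<tau> s)))\<^sup>2 \<le> (?m + \<delta> * ?r)\<^sup>2"
      using max_viol_fst_step_le[OF assms \<tau>'] max_viol_nonneg[OF sample_finite_nonempty[OF \<tau>']]
      by (intro power_mono) auto
    also have "\<dots> \<le> (1 + \<delta>) * (?m\<^sup>2 + \<delta> * ?r\<^sup>2)"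
      using mult_nonneg_nonneg[OF delta zero_le_power2[of "?m - ?r"]]
      by (simp add: algebra_simps power2_eq_square)
    finally show ?thesis
      by (simp add: field_simps)
  qed
  then have "fobj A b \<beta> (fst (step \<tau> s))
      \<le> avg (samples \<beta>) (\<lambda>\<tau>'. (1 + \<delta>) * ((max_viol A b \<tau>' (y_of s))\<^sup>2 / 2 + \<delta> / 2 * ?r\<^sup>2))"
    unfolding fobj_eq_avg[of A b \<beta> "fst (step \<tau> s)"] by (rule avg_mono)
  also have "\<dots> = (1 + \<delta>) * (fobj A b \<beta> (y_of s) + \<delta> / 2 * ?r\<^sup>2)"
    unfolding avg_cmult avg_add avg_const[OF samples_finite_nonempty] fobj_eq_avg ..
  finally show ?thesis .
qed

lemma avg_fobj_fst_step_le:
  "avg (samples \<beta>) (\<lambda>\<tau>. fobj A b \<beta> (fst (step \<tau> s))) \<le> (1 + \<delta>)\<^sup>2 * fobj A b \<beta> (y_of s)"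
proof -
  have "avg (samples \<beta>) (\<lambda>\<tau>. fobj A b \<beta> (fst (step \<tau> s)))
      \<le> avg (samples \<beta>) (\<lambda>\<tau>. (1 + \<delta>) * (fobj A b \<beta> (y_of s) + \<delta> / 2 * (max_viol A b \<tau> (y_of s))\<^sup>2))"
    by (rule avg_mono) (rule fobj_fst_step_le)
  also have "\<dots> = (1 + \<delta>) * (fobj A b \<beta> (y_of s) + \<delta> / 2 * (2 * fobj A b \<beta> (y_of s)))"
    unfolding avg_cmult avg_add avg_const[OF samples_finite_nonempty] avg_max_viol_sq ..
  also have "\<dots> = (1 + \<delta>)\<^sup>2 * fobj A b \<beta> (y_of s)"
    by (simp add: algebra_simps power2_eq_square)
  finally show ?thesis .
qed

lemma states_Nil [simp]: "states x0 [] = (x0, x0)"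
  unfolding states_def by simp

lemma states_snoc [simp]: "states x0 (ts @ [t]) = step t (states x0 ts)"
  unfolding states_def by simp

lemma paskm_y_eq: "paskm_y A b sel \<alpha> \<omega> \<delta> \<gamma> x0 ts = y_of (states x0 ts)"
  unfolding paskm_y_def y_of_def states_def Let_def ..

lemma expected_fobj_y_0: "expected_fobj_y x0 0 = fobj A b \<beta> x0"
  unfolding expected_fobj_y_def sample_seqs_0 avg_singleton by (simp add: y_of_diag)

lemma expected_fobj_y_nonneg: "0 \<le> expected_fobj_y x0 l"
  unfolding expected_fobj_y_def by (rule avg_nonneg) (rule fobj_nonneg)

lemma expected_fobj_x_Suc_le: "expected_fobj_x x0 (Suc l) \<le> (1 + \<delta>)\<^sup>2 * expected_fobj_y x0 l"
proof -
  have "expected_fobj_x x0 (Suc l)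
      = avg (sample_seqs \<beta> l) (\<lambda>ts. avg (samples \<beta>) (\<lambda>t. fobj A b \<beta> (fst (step t (states x0 ts)))))"
    unfolding expected_fobj_x_def avg_sample_seqs_Suc by simp
  also have "\<dots> \<le> avg (sample_seqs \<beta> l) (\<lambda>ts. (1 + \<delta>)\<^sup>2 * fobj A b \<beta> (y_of (states x0 ts)))"
    by (rule avg_mono) (rule avg_fobj_fst_step_le)
  finally show ?thesis
    unfolding avg_cmult expected_fobj_y_def .
qed

lemma expect_fobj_ybar_le:
  assumes "1 \<le> k"
  shows "expect_seqs \<beta> k (\<lambda>ts. fobj A b \<beta> (paskm_ybar A b sel \<alpha> \<omega> \<delta> \<gamma> x0 ts))
    \<le> (\<Sum>l=1..k. expected_fobj_y x0 l) / real k"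
proof -
  have "expect_seqs \<beta> k (\<lambda>ts. fobj A b \<beta> (paskm_ybar A b sel \<alpha> \<omega> \<delta> \<gamma> x0 ts))
      \<le> avg (sample_seqs \<beta> k) (\<lambda>ts. (\<Sum>l=1..k. fobj A b \<beta> (y_of (states x0 (take l ts)))) / real k)"
    unfolding expect_seqs_eq_avg
  proof (rule avg_mono)
    fix ts :: "'m set list"
    assume "ts \<in> sample_seqs \<beta> k"
    then have "length ts = k"
      by (simp add: sample_seqs_def)
    then show "fobj A b \<beta> (paskm_ybar A b sel \<alpha> \<omega> \<delta> \<gamma> x0 ts)
        \<le> (\<Sum>l=1..k. fobj A b \<beta> (y_of (states x0 (take l ts)))) / real k"
      unfolding paskm_ybar_def paskm_y_eq using fobj_mean_le[OF beta(1) assms] by simp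
  qed
  also have "\<dots> = (\<Sum>l=1..k. expected_fobj_y x0 l) / real k"
  proof -
    have "avg (sample_seqs \<beta> k) (\<lambda>ts. fobj A b \<beta> (y_of (states x0 (take l ts)))) = expected_fobj_y x0 l"
      if "l \<in> {1..k}" for l
      unfolding expected_fobj_y_def using that by (intro avg_sample_seqs_take[OF beta(2)]) simp
    then show ?thesis
      unfolding avg_divide avg_sum by simp
  qed
  finally show ?thesis .
qed

end

locale paskm_anchored = paskm A b sel \<beta> \<alpha> \<omega> \<delta> \<gamma>
  for A :: "real^'n^('m::finite)" and b sel \<beta> \<alpha> \<omega> \<delta> \<gamma> +
  fixes p :: "real^'n"
  assumes feasible: "p \<in> feas_set A b"
begin

text \<open>Thanks to the relation between \<open>\<gamma>\<close> and \<open>\<delta>\<close>, a PASKM step acts on \<open>z\<close> as a plain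
  Kaczmarz step.\<close>

definition z :: "(real^'n) \<times> (real^'n) \<Rightarrow> real^'n" where
  "z s = \<alpha> *\<^sub>R snd s + ((1 - \<omega>) * (1 - \<alpha>)) *\<^sub>R fst s - (1 - \<theta>) *\<^sub>R p"

definition lyap :: "(real^'n) \<times> (real^'n) \<Rightarrow> real" where
  "lyap s = (norm (z s))\<^sup>2"

definition expected_lyap :: "real^'n \<Rightarrow> nat \<Rightarrow> real" where
  "expected_lyap x0 l = avg (sample_seqs \<beta> l) (\<lambda>ts. lyap (states x0 ts))"

lemma z_step: "z (step \<tau> s) = z s - (\<delta> * viol A b (sel \<tau> (y_of s)) (y_of s)) *\<^sub>R A $ sel \<tau> (y_of s)"
proof -
  obtain x v where s: "s = (x, v)"
    by force
  define y where "y = y_of s"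
  define i where "i = sel \<tau> y"
  define r where "r = viol A b i y"
  have y: "y = \<alpha> *\<^sub>R v + (1 - \<alpha>) *\<^sub>R x"
    unfolding y_def y_of_def s by simp
  have step: "step \<tau> s = (y - (\<delta> * r) *\<^sub>R A$i, \<omega> *\<^sub>R v + (1 - \<omega>) *\<^sub>R y - (\<gamma> * r) *\<^sub>R A$i)"
    unfolding paskm_step_def s Let_def i_def r_def y_def y_of_def by simp
  have "\<alpha> * (\<gamma> * r) + (1 - \<omega>) * (1 - \<alpha>) * (\<delta> * r) = (\<alpha> * \<gamma> + (1 - \<omega>) * (1 - \<alpha>) * \<delta>) * r"
    by (simp add: algebra_simps)
  also have "\<alpha> * \<gamma> + (1 - \<omega>) * (1 - \<alpha>) * \<delta> = \<delta>"
    using gamma by (simp add: algebra_simps)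
  finally have coeff: "\<alpha> * (\<gamma> * r) + (1 - \<omega>) * (1 - \<alpha>) * (\<delta> * r) = \<delta> * r" .
  have "z (step \<tau> s) = \<alpha> *\<^sub>R v + ((1 - \<omega>) * (1 - \<alpha>)) *\<^sub>R x - (1 - \<theta>) *\<^sub>R p
      - (\<alpha> * (\<gamma> * r) + (1 - \<omega>) * (1 - \<alpha>) * (\<delta> * r)) *\<^sub>R A$i"
    unfolding z_def step y vec_eq_iff by (simp add: algebra_simps)
  also have "\<dots> = z s - (\<delta> * r) *\<^sub>R A$i"
    unfolding coeff z_def s by simp
  finally show ?thesis
    unfolding r_def i_def y_def .
qed

lemma inner_z: "a \<bullet> z s = a \<bullet> y_of s - \<theta> * (a \<bullet> fst s) - (1 - \<theta>) * (a \<bullet> p)"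
  unfolding z_def y_of_def by (simp add: inner_diff_right inner_add_right algebra_simps)

lemma viol_inner_z_ge:
  "(viol A b i (y_of s))\<^sup>2 - \<theta> * viol A b i (y_of s) * viol A b i (fst s)
    \<le> viol A b i (y_of s) * (A$i \<bullet> z s)"
proof (cases "A$i \<bullet> y_of s \<le> b$i")
  case True
  then show ?thesis
    by (simp add: viol_def)
next
  case False
  let ?r = "viol A b i (y_of s)" and ?t = "viol A b i (fst s)"
  have r: "?r = A$i \<bullet> y_of s - b$i"
    using False by (simp add: viol_def)
  have "(1 - \<theta>) * (A$i \<bullet> p) \<le> (1 - \<theta>) * b$i"
    using feasible theta_le_1 by (intro mult_left_mono) (auto simp: feas_set_def)
  moreover have "\<theta> * (A$i \<bullet> fst s) \<le> \<theta> * (b$i + ?t)"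
    using theta_nonneg by (intro mult_left_mono) (auto simp: viol_def)
  ultimately have "?r - \<theta> * ?t \<le> A$i \<bullet> z s"
    unfolding inner_z r by (simp add: algebra_simps)
  then have "?r * (?r - \<theta> * ?t) \<le> ?r * (A$i \<bullet> z s)"
    by (rule mult_left_mono) (simp add: viol_def)
  then show ?thesis
    by (simp add: algebra_simps power2_eq_square)
qed

lemma lyap_step_le:
  fixes s :: "(real^'n) \<times> (real^'n)" and \<tau> :: "'m set"
  defines "y \<equiv> y_of s" and "i \<equiv> sel \<tau> (y_of s)"
  shows "lyap (step \<tau> s)
    \<le> lyap s - (2 * \<delta> - \<delta>\<^sup>2) * (viol A b i y)\<^sup>2 + 2 * \<delta> * \<theta> * viol A b i y * viol A b i (fst s)"
proof -
  let ?r = "viol A b i y"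
  have unit: "A$i \<bullet> A$i = 1"
    using rows[of i] by (metis power2_norm_eq_inner power_one)
  have "lyap (step \<tau> s) = (z s - (\<delta> * ?r) *\<^sub>R A$i) \<bullet> (z s - (\<delta> * ?r) *\<^sub>R A$i)"
    unfolding lyap_def z_step power2_norm_eq_inner y_def i_def ..
  also have "\<dots> = lyap s - 2 * \<delta> * (?r * (A$i \<bullet> z s)) + \<delta>\<^sup>2 * ?r\<^sup>2"
    unfolding lyap_def power2_norm_eq_inner using unit
    by (simp add: inner_diff_left inner_diff_right inner_commute algebra_simps power2_eq_square)
  also have "\<dots> \<le> lyap s - 2 * \<delta> * (?r\<^sup>2 - \<theta> * ?r * viol A b i (fst s)) + \<delta>\<^sup>2 * ?r\<^sup>2"
    using viol_inner_z_ge[of i s] delta unfolding y_def by (simp add: mult_left_mono)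
  finally show ?thesis
    by (simp add: algebra_simps power2_eq_square)
qed

lemma avg_lyap_step_le:
  "avg (samples \<beta>) (\<lambda>\<tau>. lyap (step \<tau> s))
    \<le> lyap s - 2 * (2 * \<delta> - \<delta>\<^sup>2 - \<delta> * \<theta> * (1 + \<delta>)) * fobj A b \<beta> (y_of s)
       + 2 * \<delta> * \<theta> / (1 + \<delta>) * fobj A b \<beta> (fst s)"
proof -
  have "lyap (step \<tau> s)
      \<le> lyap s - (2 * \<delta> - \<delta>\<^sup>2 - \<delta> * \<theta> * (1 + \<delta>)) * (max_viol A b \<tau> (y_of s))\<^sup>2
         + \<delta> * \<theta> / (1 + \<delta>) * (max_viol A b \<tau> (fst s))\<^sup>2"
    if \<tau>: "\<tau> \<in> samples \<beta>" for \<tau>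
  proof -
    define r where "r = max_viol A b \<tau> (y_of s)"
    define t where "t = viol A b (sel \<tau> (y_of s)) (fst s)"
    have "sel \<tau> (y_of s) \<in> \<tau>"
      using sel[OF \<tau>] by blast
    then have t: "0 \<le> t" "t \<le> max_viol A b \<tau> (fst s)"
      unfolding t_def using viol_le_max_viol[OF sample_finite_nonempty(1)[OF \<tau>]] by (simp_all add: viol_def)
    have "2 * r * t \<le> t\<^sup>2 / (1 + \<delta>) + (1 + \<delta>) * r\<^sup>2"
    proof -
      have "0 \<le> (t - (1 + \<delta>) * r)\<^sup>2 / (1 + \<delta>)"
        using delta by simp
      then show ?thesis
        using delta by (simp add: field_simps power2_eq_square)
    qed
    moreover have "t\<^sup>2 / (1 + \<delta>) \<le> (max_viol A b \<tau> (fst s))\<^sup>2 / (1 + \<delta>)"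
      using power_mono[OF t(2) t(1)] delta by (intro divide_right_mono) auto
    ultimately have "2 * r * t \<le> (max_viol A b \<tau> (fst s))\<^sup>2 / (1 + \<delta>) + (1 + \<delta>) * r\<^sup>2"
      by linarith
    then have "\<delta> * \<theta> * (2 * r * t) \<le> \<delta> * \<theta> * ((max_viol A b \<tau> (fst s))\<^sup>2 / (1 + \<delta>) + (1 + \<delta>) * r\<^sup>2)"
      using delta theta_nonneg by (intro mult_left_mono) auto
    moreover have "lyap (step \<tau> s) \<le> lyap s - (2 * \<delta> - \<delta>\<^sup>2) * r\<^sup>2 + \<delta> * \<theta> * (2 * r * t)"
      using lyap_step_le[of \<tau> s] viol_sel_eq_max_viol[OF \<tau>] unfolding r_def t_def
      by (simp add: algebra_simps)
    ultimately show ?thesis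
      unfolding r_def by (simp add: algebra_simps)
  qed
  then have "avg (samples \<beta>) (\<lambda>\<tau>. lyap (step \<tau> s))
      \<le> avg (samples \<beta>) (\<lambda>\<tau>. lyap s - (2 * \<delta> - \<delta>\<^sup>2 - \<delta> * \<theta> * (1 + \<delta>)) * (max_viol A b \<tau> (y_of s))\<^sup>2
         + \<delta> * \<theta> / (1 + \<delta>) * (max_viol A b \<tau> (fst s))\<^sup>2)"
    by (rule avg_mono)
  also have "\<dots> = lyap s - (2 * \<delta> - \<delta>\<^sup>2 - \<delta> * \<theta> * (1 + \<delta>)) * (2 * fobj A b \<beta> (y_of s))
       + \<delta> * \<theta> / (1 + \<delta>) * (2 * fobj A b \<beta> (fst s))"
    unfolding avg_add avg_diff avg_cmult avg_const[OF samples_finite_nonempty] avg_max_viol_sq ..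
  finally show ?thesis
    by (simp add: algebra_simps)
qed

text \<open>At \<open>x = v\<close>, as for the initial state, the cross term is bounded by the selected
  violation itself, so no \<open>f(x)\<close> term appears.\<close>

lemma avg_lyap_step_le_diag:
  assumes "fst s = snd s"
  shows "avg (samples \<beta>) (\<lambda>\<tau>. lyap (step \<tau> s))
    \<le> lyap s - 2 * (2 * \<delta> * (1 - \<theta>) - \<delta>\<^sup>2) * fobj A b \<beta> (y_of s)"
proof -
  have "lyap (step \<tau> s) \<le> lyap s - (2 * \<delta> * (1 - \<theta>) - \<delta>\<^sup>2) * (max_viol A b \<tau> (y_of s))\<^sup>2"
    if \<tau>: "\<tau> \<in> samples \<beta>" for \<tau>
    using lyap_step_le[of \<tau> s] viol_sel_eq_max_viol[OF \<tau>] y_of_diag[OF assms]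
    by (simp add: algebra_simps power2_eq_square)
  then have "avg (samples \<beta>) (\<lambda>\<tau>. lyap (step \<tau> s))
      \<le> avg (samples \<beta>) (\<lambda>\<tau>. lyap s - (2 * \<delta> * (1 - \<theta>) - \<delta>\<^sup>2) * (max_viol A b \<tau> (y_of s))\<^sup>2)"
    by (rule avg_mono)
  also have "\<dots> = lyap s - (2 * \<delta> * (1 - \<theta>) - \<delta>\<^sup>2) * (2 * fobj A b \<beta> (y_of s))"
    unfolding avg_diff avg_cmult avg_const[OF samples_finite_nonempty] avg_max_viol_sq ..
  finally show ?thesis
    by (simp add: algebra_simps)
qed

lemma expected_lyap_Suc_le:
  "expected_lyap x0 (Suc l)
    \<le> expected_lyap x0 l - 2 * (2 * \<delta> - \<delta>\<^sup>2 - \<delta> * \<theta> * (1 + \<delta>)) * expected_fobj_y x0 l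
       + 2 * \<delta> * \<theta> / (1 + \<delta>) * expected_fobj_x x0 l"
proof -
  have "expected_lyap x0 (Suc l)
      = avg (sample_seqs \<beta> l) (\<lambda>ts. avg (samples \<beta>) (\<lambda>t. lyap (step t (states x0 ts))))"
    unfolding expected_lyap_def avg_sample_seqs_Suc by simp
  also have "\<dots> \<le> avg (sample_seqs \<beta> l) (\<lambda>ts. lyap (states x0 ts)
       - 2 * (2 * \<delta> - \<delta>\<^sup>2 - \<delta> * \<theta> * (1 + \<delta>)) * fobj A b \<beta> (y_of (states x0 ts))
       + 2 * \<delta> * \<theta> / (1 + \<delta>) * fobj A b \<beta> (fst (states x0 ts)))"
    by (rule avg_mono) (rule avg_lyap_step_le)
  finally show ?thesis
    unfolding avg_add avg_diff avg_cmult expected_lyap_def expected_fobj_y_def expected_fobj_x_def .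
qed

lemma expected_lyap_1_le:
  "expected_lyap x0 1 \<le> expected_lyap x0 0 - 2 * (2 * \<delta> * (1 - \<theta>) - \<delta>\<^sup>2) * expected_fobj_y x0 0"
proof -
  have "expected_lyap x0 1 = avg (samples \<beta>) (\<lambda>t. lyap (step t (x0, x0)))"
    unfolding expected_lyap_def One_nat_def avg_sample_seqs_Suc sample_seqs_0 avg_singleton
    by (simp add: states_def)
  also have "\<dots> \<le> lyap (x0, x0) - 2 * (2 * \<delta> * (1 - \<theta>) - \<delta>\<^sup>2) * fobj A b \<beta> (y_of (x0, x0))"
    by (rule avg_lyap_step_le_diag) simp
  finally show ?thesis
    unfolding expected_lyap_def expected_fobj_y_def sample_seqs_0 avg_singleton by simp
qed

lemma expected_lyap_0: "expected_lyap x0 0 = (1 - \<theta>)\<^sup>2 * (norm (x0 - p))\<^sup>2"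
proof -
  have "z (x0, x0) = (1 - \<theta>) *\<^sub>R (x0 - p)"
    unfolding z_def by (simp add: algebra_simps)
  then show ?thesis
    unfolding expected_lyap_def sample_seqs_0 avg_singleton lyap_def
    by (simp add: power_mult_distrib)
qed

lemma expected_lyap_nonneg: "0 \<le> expected_lyap x0 l"
  unfolding expected_lyap_def lyap_def by (rule avg_nonneg) simp

lemma sum_expected_fobj_y_le:
  "2 * \<delta> * (2 - 2 * \<theta> - \<delta> - 2 * \<theta> * \<delta>) * (\<Sum>l=1..k. expected_fobj_y x0 l)
    \<le> (1 - \<theta>)\<^sup>2 * (norm (x0 - p))\<^sup>2 - 2 * \<delta> * (2 - 3 * \<theta> - \<delta> - \<theta> * \<delta>) * fobj A b \<beta> x0"
proof -
  have e_\<kappa>: "2 * \<delta> * \<theta> / (1 + \<delta>) * (1 + \<delta>)\<^sup>2 = 2 * \<delta> * \<theta> * (1 + \<delta>)"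
    using delta by (simp add: power2_eq_square)
  have "(2 * (2 * \<delta> - \<delta>\<^sup>2 - \<delta> * \<theta> * (1 + \<delta>)) - 2 * \<delta> * \<theta> / (1 + \<delta>) * (1 + \<delta>)\<^sup>2)
        * (\<Sum>l=1..k. expected_fobj_y x0 l)
      \<le> expected_lyap x0 0
        - (2 * (2 * \<delta> * (1 - \<theta>) - \<delta>\<^sup>2) - 2 * \<delta> * \<theta> / (1 + \<delta>) * (1 + \<delta>)\<^sup>2) * expected_fobj_y x0 0"
    using delta theta_nonneg
    by (intro telescoping_sum_le[where G = "expected_fobj_x x0"] expected_lyap_Suc_le
        expected_lyap_1_le expected_fobj_x_Suc_le expected_lyap_nonneg expected_fobj_y_nonneg) auto
  then show ?thesis
    unfolding e_\<kappa> expected_lyap_0 expected_fobj_y_0 by (simp add: algebra_simps power2_eq_square)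
qed

end

lemma step_size_bound_pos:
  fixes \<delta> \<theta> :: real
  assumes "0 < \<delta>" "0 \<le> \<theta>" "\<delta> < 2 * (1 - \<theta>) / (1 + 2 * \<theta>)"
  shows "0 < 2 * \<delta> * (2 - 2 * \<theta> - \<delta> - 2 * \<theta> * \<delta>)"
proof -
  have "\<delta> * (1 + 2 * \<theta>) < 2 * (1 - \<theta>)"
    using assms by (simp add: pos_less_divide_eq)
  then have "0 < 2 * \<delta> * (2 * (1 - \<theta>) - \<delta> * (1 + 2 * \<theta>))"
    using assms(1) by simp
  then show ?thesis
    by (simp add: algebra_simps)
qed

theorem theorem9:
  fixes A :: "real^'n^('m::finite)" and b :: "real^'m" and x0 :: "real^'n"
    and sel :: "'m set \<Rightarrow> real^'n \<Rightarrow> 'm"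
    and \<beta> k :: nat and \<alpha> \<omega> \<delta> \<gamma> :: real
  assumes rows: "\<And>i. norm (A$i) = 1"
    and consistent: "feas_set A b \<noteq> {}"
    and beta: "1 \<le> \<beta>" "\<beta> \<le> CARD('m)"
    and sel: "\<And>\<tau> y. \<tau> \<in> samples \<beta> \<Longrightarrow>
                 sel \<tau> y \<in> \<tau> \<and> (\<forall>i\<in>\<tau>. viol A b i y \<le> viol A b (sel \<tau> y) y)"
    and alpha: "0 \<le> 1 - \<alpha>" "1 - \<alpha> < 1"
    and omega: "0 \<le> \<omega>" "\<omega> < 1"
    and delta: "0 < \<delta>" "\<delta> < 2 * (1 - \<omega> + \<alpha> * \<omega>) / (1 + 2 * \<omega> - 2 * \<alpha> * \<omega>)"
    and gamma: "\<alpha> * \<gamma> = \<alpha> * \<delta> + \<omega> * \<delta> * (1 - \<alpha>)"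
    and k: "1 \<le> k"
  shows "expect_seqs \<beta> k (\<lambda>ts. fobj A b \<beta> (paskm_ybar A b sel \<alpha> \<omega> \<delta> \<gamma> x0 ts))
     \<le> ((1 - \<omega> + \<alpha> * \<omega>)^2 * (infdist x0 (feas_set A b))^2
         + 2 * \<delta> * (\<delta> - 2 + 3 * \<omega> - 3 * \<alpha> * \<omega> + \<delta> * \<omega> - \<delta> * \<alpha> * \<omega>) * fobj A b \<beta> x0)
       / (2 * \<delta> * real k * (2 - 2 * \<omega> + 2 * \<alpha> * \<omega> - 2 * \<delta> * \<omega> + 2 * \<delta> * \<alpha> * \<omega> - \<delta>))"
proof -
  obtain p where p: "p \<in> feas_set A b" and dist_p: "infdist x0 (feas_set A b) = dist x0 p"
    using infdist_attains_inf[OF closed_feas_set consistent] by blast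
  have "0 < 2 * \<delta> * (2 - 2 * (\<omega> * (1 - \<alpha>)) - \<delta> - 2 * (\<omega> * (1 - \<alpha>)) * \<delta>)"
    using delta alpha omega
    by (intro step_size_bound_pos) (simp_all add: algebra_simps mult_left_le_one_le)
  interpret paskm_anchored A b sel \<beta> \<alpha> \<omega> \<delta> \<gamma> p
    using rows beta sel alpha omega delta gamma p by unfold_locales auto
  define D where "D = 2 * \<delta> * (2 - 2 * \<theta> - \<delta> - 2 * \<theta> * \<delta>)"
  have "0 < D"
    unfolding D_def by fact
  have "expect_seqs \<beta> k (\<lambda>ts. fobj A b \<beta> (paskm_ybar A b sel \<alpha> \<omega> \<delta> \<gamma> x0 ts))
      \<le> (\<Sum>l=1..k. expected_fobj_y x0 l) / real k"
    by (rule expect_fobj_ybar_le[OF k])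
  also have "\<dots> \<le> ((1 - \<theta>)\<^sup>2 * (norm (x0 - p))\<^sup>2 - 2 * \<delta> * (2 - 3 * \<theta> - \<delta> - \<theta> * \<delta>) * fobj A b \<beta> x0)
      / D / real k"
    using sum_expected_fobj_y_le[of x0 k, folded D_def] \<open>0 < D\<close>
    by (intro divide_right_mono) (simp_all add: pos_le_divide_eq mult.commute)
  finally show ?thesis
    unfolding D_def dist_p dist_norm by (simp add: algebra_simps)
qed

end
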